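(* Let $r\ge1$, let $\mu=\langle\mu_1,\dots,\mu_{r+1}\rangle\in\mathbb{Z}^{r+1}$ with $\sum_i\mu_i=0$, and let $\Lambda\subseteq\Phi^+_{A_r}$. Let $\mathcal{T}=\Gamma(\Lambda)=\{T_{i,j}:\varepsilon_i-\varepsilon_{i+j}\in\Lambda\}$. Then $P_\Lambda(\mu)$ is in bijection with $\mathrm{JS}_{\mathcal{T}}(\langle\mu_1,\dots,\mu_r\rangle,\langle\mu_1+\cdots+\mu_r\rangle,r)$ (via juggling sequence $\mapsto$ multiset of roots $\varepsilon_i-\varepsilon_{i+j}$, one per throw at time $i$ to height $j$), and \[K_\Lambda(\mu)=\mathsf{js}_{\mathcal{T}}(\langle\mu_1,\dots,\mu_r\rangle,\langle\mu_1+\cdots+\mu_r\rangle,r).\]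
   Context: A juggling state is a finitely supported integer vector $\mathbf{s}=\langle s_1,s_2,\dots\rangle$ indexed by heights (trailing zeros omitted; negative entries are magic balls). A juggling sequence of length $n$ from $\mathbf{a}$ to $\mathbf{b}$ is a sequence $(\mathbf{s}_0,\dots,\mathbf{s}_n)$ with $\mathbf{s}_0=\mathbf{a}$, $\mathbf{s}_n=\mathbf{b}$, such that for each $1\le i\le n$ there are nonnegative integers $c^{(i)}_k$ (finitely many nonzero) with $\sum_k c^{(i)}_k=(\mathbf{s}_{i-1})_1$ and $(\mathbf{s}_i)_k=(\mathbf{s}_{i-1})_{k+1}+c^{(i)}_k$ for all $k\ge1$; $c^{(i)}_j$ is the number of throws at time $i$ to height $j$, and $T_{i,j}$ denotes "a throw at time $i$ to height $j$". For a set $\mathcal{T}$ of throws, $\mathrm{JS}_{\mathcal{T}}(\mathbf{a},\mathbf{b},n)$ is the set of juggling sequences in which $c^{(i)}_j>0$ only if $T_{i,j}\in\mathcal{T}$, and $\mathsf{js}_{\mathcal{T}}$ its cardinality. $\Phi^+_{A_r}=\{\varepsilon_i-\varepsilon_j:1\le i<j\le r+1\}\subset\mathbb{R}^{r+1}$; for $\Lambda\subseteq\Phi^+_{A_r}$, $P_\Lambda(\mu)$ is the set of finite multisets of elements of $\Lambda$ summing to $\mu$ and $K_\Lambda(\mu)=|P_\Lambda(\mu)|$. *)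

theory Defs
  imports Main "HOL-Library.Multiset"
begin

text \<open>Juggling states: integer vectors indexed by heights 1,2,...; represented as
  functions nat => int with the (unused) index 0 fixed to 0 and finite support.\<close>

definition juggling_state :: "(nat \<Rightarrow> int) \<Rightarrow> bool" where
  "juggling_state s \<longleftrightarrow> s 0 = 0 \<and> finite {k. s k \<noteq> 0}"

text \<open>One step of a juggling sequence at time i from state s to state t, with throws
  restricted to the set T of throws (a throw T_{i,j} is the pair (i,j)).
  The throw counts c k (k >= 1) are uniquely determined: c k = t k - s (k+1).\<close>

definition juggling_step :: "(nat \<times> nat) set \<Rightarrow> nat \<Rightarrow> (nat \<Rightarrow> int) \<Rightarrow> (nat \<Rightarrow> int) \<Rightarrow> bool" where
  "juggling_step T i s t \<longleftrightarrow>
     (\<exists>c :: nat \<Rightarrow> nat. c 0 = 0 \<and> finite {k. c k \<noteq> 0}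
        \<and> int (\<Sum>k\<in>{k. c k \<noteq> 0}. c k) = s 1
        \<and> (\<forall>k\<ge>1. t k = s (k + 1) + int (c k))
        \<and> (\<forall>k. 0 < c k \<longrightarrow> (i, k) \<in> T))"

definition JS :: "(nat \<times> nat) set \<Rightarrow> (nat \<Rightarrow> int) \<Rightarrow> (nat \<Rightarrow> int) \<Rightarrow> nat \<Rightarrow> (nat \<Rightarrow> int) list set" where
  "JS T a b n = {ss. length ss = n + 1 \<and> ss ! 0 = a \<and> ss ! n = b
      \<and> (\<forall>s\<in>set ss. juggling_state s)
      \<and> (\<forall>i\<in>{1..n}. juggling_step T i (ss ! (i - 1)) (ss ! i))}"

definition js :: "(nat \<times> nat) set \<Rightarrow> (nat \<Rightarrow> int) \<Rightarrow> (nat \<Rightarrow> int) \<Rightarrow> nat \<Rightarrow> nat" where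
  "js T a b n = card (JS T a b n)"

definition throw_count :: "(nat \<Rightarrow> int) list \<Rightarrow> nat \<Rightarrow> nat \<Rightarrow> nat" where
  "throw_count ss i j = nat ((ss ! i) j - (ss ! (i - 1)) (j + 1))"

text \<open>Vectors in Z^{r+1} as functions nat => int (coordinates 1..r+1).
  The root eps_i - eps_j.\<close>

definition root :: "nat \<Rightarrow> nat \<Rightarrow> (nat \<Rightarrow> int)" where
  "root i j = (\<lambda>k. (if k = i then 1 else 0) - (if k = j then 1 else 0))"

definition pos_roots_A :: "nat \<Rightarrow> (nat \<Rightarrow> int) set" where
  "pos_roots_A r = {root i j | i j. 1 \<le> i \<and> i < j \<and> j \<le> r + 1}"

definition vsum :: "(nat \<Rightarrow> int) multiset \<Rightarrow> (nat \<Rightarrow> int)" where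
  "vsum M = (\<lambda>k. \<Sum>x\<in>#M. x k)"

definition P_part :: "(nat \<Rightarrow> int) set \<Rightarrow> (nat \<Rightarrow> int) \<Rightarrow> (nat \<Rightarrow> int) multiset set" where
  "P_part \<Lambda> \<mu> = {M. set_mset M \<subseteq> \<Lambda> \<and> vsum M = \<mu>}"

definition K_part :: "(nat \<Rightarrow> int) set \<Rightarrow> (nat \<Rightarrow> int) \<Rightarrow> nat" where
  "K_part \<Lambda> \<mu> = card (P_part \<Lambda> \<mu>)"

definition Gamma :: "(nat \<Rightarrow> int) set \<Rightarrow> (nat \<times> nat) set" where
  "Gamma \<Lambda> = {(i, j). 1 \<le> i \<and> 1 \<le> j \<and> root i (i + j) \<in> \<Lambda>}"

definition js_to_roots :: "nat \<Rightarrow> (nat \<Rightarrow> int) list \<Rightarrow> (nat \<Rightarrow> int) multiset" where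
  "js_to_roots n ss = (\<Sum>i\<in>{1..n}. \<Sum>j\<in>{j. 1 \<le> j \<and> 0 < throw_count ss i j}.
        replicate_mset (throw_count ss i j) (root i (i + j)))"

end

theory Submission
  imports Defs
begin

text \<open>Record a juggling sequence of length r by its throw counts m i j (throw at time i to
  height j, so 1 \<le> i, 1 \<le> j, i + j \<le> r + 1) and send each throw to the root
  \<open>\<epsilon>\<^sub>i - \<epsilon>\<^sub>i\<^sub>+\<^sub>j\<close>. The coordinate k of the resulting sum is the number of throws made at time k
  minus the number of balls landing at time k. The balls thrown at time k are exactly those
  at height 1 before that step, which are the balls \<open>\<mu>\<^sub>k\<close> of the initial state plus the balls
  landing at time k; hence coordinate k equals \<open>\<mu>\<^sub>k\<close> for k \<le> r. Coordinate r + 1 counts only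
  landings, i.e. the balls of the final state, and \<open>-(\<mu>\<^sub>1 + \<dots> + \<mu>\<^sub>r) = \<mu>\<^sub>r\<^sub>+\<^sub>1\<close>. Conversely, every state of the sequence
  is the initial state shifted down plus the balls already thrown, so the sequence is
  recovered from the multiset of roots.\<close>

lemma root_apply: "root i l k = (if k = i then 1 else 0) - (if k = l then 1 else 0)"
  by (simp add: root_def)

lemma root_eq_root_iff:
  assumes "i < l" "i' < l'"
  shows "root i l = root i' l' \<longleftrightarrow> i = i' \<and> l = l'"
proof
  assume "root i l = root i' l'"
  then have "root i l i = root i' l' i" "root i l l = root i' l' l" by auto
  then show "i = i' \<and> l = l'" using assms unfolding root_def by (auto split: if_splits)
qed auto

lemma mem_pos_roots_A_iff:
  "x \<in> pos_roots_A r \<longleftrightarrow> (\<exists>i j. 1 \<le> i \<and> 1 \<le> j \<and> i + j \<le> r + 1 \<and> x = root i (i + j))"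
proof
  assume "x \<in> pos_roots_A r"
  then obtain i l where "x = root i l" "1 \<le> i" "i < l" "l \<le> r + 1"
    unfolding pos_roots_A_def by blast
  then show "\<exists>i j. 1 \<le> i \<and> 1 \<le> j \<and> i + j \<le> r + 1 \<and> x = root i (i + j)"
    by (intro exI[of _ i] exI[of _ "l - i"]) auto
qed (force simp: pos_roots_A_def)

lemma root_add_in_pos_roots_A_iff:
  assumes "1 \<le> i" "1 \<le> j"
  shows "root i (i + j) \<in> pos_roots_A r \<longleftrightarrow> i + j \<le> r + 1"
proof
  assume "root i (i + j) \<in> pos_roots_A r"
  then obtain i' j' where "1 \<le> j'" "i' + j' \<le> r + 1" "root i (i + j) = root i' (i' + j')"
    unfolding mem_pos_roots_A_iff by blast
  with assms root_eq_root_iff[of i "i + j" i' "i' + j'"] show "i + j \<le> r + 1" by auto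
qed (use assms in \<open>auto simp: mem_pos_roots_A_iff\<close>)

lemma Gamma_memD:
  assumes "(i, j) \<in> Gamma \<Lambda>" "\<Lambda> \<subseteq> pos_roots_A r"
  shows "1 \<le> i" "1 \<le> j" "i + j \<le> r + 1" "root i (i + j) \<in> \<Lambda>"
  using assms root_add_in_pos_roots_A_iff unfolding Gamma_def by blast+

subsection \<open>Multisets of roots from throw counts\<close>

definition roots_of_throws :: "nat \<Rightarrow> (nat \<Rightarrow> nat \<Rightarrow> nat) \<Rightarrow> (nat \<Rightarrow> int) multiset" where
  "roots_of_throws r m = (\<Sum>i\<in>{1..r}. \<Sum>j\<in>{1..r+1-i}. replicate_mset (m i j) (root i (i + j)))"

lemma roots_of_throws_cong:
  "(\<And>i j. 1 \<le> i \<Longrightarrow> 1 \<le> j \<Longrightarrow> i + j \<le> r + 1 \<Longrightarrow> m i j = m' i j) \<Longrightarrow>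
     roots_of_throws r m = roots_of_throws r m'"
  unfolding roots_of_throws_def by (intro sum.cong refl) auto

lemma count_roots_of_throws:
  "count (roots_of_throws r m) x =
     (\<Sum>i\<in>{1..r}. \<Sum>j\<in>{1..r+1-i}. if root i (i + j) = x then m i j else 0)"
  unfolding roots_of_throws_def count_sum by (intro sum.cong refl) auto

lemma count_roots_of_throws_root:
  assumes "1 \<le> i" "1 \<le> j" "i + j \<le> r + 1"
  shows "count (roots_of_throws r m) (root i (i + j)) = m i j"
proof -
  have "count (roots_of_throws r m) (root i (i + j)) =
      (\<Sum>i'\<in>{1..r}. if i' = i then (\<Sum>j'\<in>{1..r+1-i'}. if j' = j then m i j else 0) else 0)"
    unfolding count_roots_of_throws
    using root_eq_root_iff[of _ _ i "i + j"] assms by (intro sum.cong refl) auto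
  also have "\<dots> = m i j" using assms by (simp add: sum.delta) linarith
  finally show ?thesis .
qed

lemma count_roots_of_throws_notin:
  assumes "x \<notin> pos_roots_A r"
  shows "count (roots_of_throws r m) x = 0"
  unfolding count_roots_of_throws
  using assms root_add_in_pos_roots_A_iff by (intro sum.neutral ballI) auto

lemma roots_of_throws_count:
  assumes "set_mset M \<subseteq> pos_roots_A r"
  shows "roots_of_throws r (\<lambda>i j. count M (root i (i + j))) = M"
proof (rule multiset_eqI)
  fix x
  show "count (roots_of_throws r (\<lambda>i j. count M (root i (i + j)))) x = count M x"
  proof (cases "x \<in> pos_roots_A r")
    case True
    then show ?thesis by (auto simp: mem_pos_roots_A_iff count_roots_of_throws_root)
  next
    case False
    with assms show ?thesis by (metis count_eq_zero_iff count_roots_of_throws_notin subsetD)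
  qed
qed

lemma set_roots_of_throws:
  assumes "x \<in># roots_of_throws r m"
  obtains i j where "1 \<le> i" "1 \<le> j" "i + j \<le> r + 1" "0 < m i j" "x = root i (i + j)"
  using assms unfolding roots_of_throws_def by (fastforce simp: set_mset_sum split: if_splits)

lemma vsum_sum: "finite A \<Longrightarrow> vsum (\<Sum>a\<in>A. f a) k = (\<Sum>a\<in>A. vsum (f a) k)"
  by (induction A rule: finite_induct) (simp_all add: vsum_def)

lemma vsum_replicate_mset: "vsum (replicate_mset n x) k = int n * x k"
  by (simp add: vsum_def)

lemma vsum_roots_of_throws:
  "vsum (roots_of_throws r m) k = (\<Sum>i\<in>{1..r}. \<Sum>j\<in>{1..r+1-i}. int (m i j) * root i (i + j) k)"
  unfolding roots_of_throws_def by (simp add: vsum_sum vsum_replicate_mset)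

lemma vsum_roots_of_throws_outside:
  "k = 0 \<or> r + 1 < k \<Longrightarrow> vsum (roots_of_throws r m) k = 0"
  unfolding vsum_roots_of_throws root_apply by (intro sum.neutral ballI) auto

lemma vsum_roots_of_throws_inside:
  assumes k: "1 \<le> k" "k \<le> r + 1"
  shows "vsum (roots_of_throws r m) k =
           (\<Sum>j\<in>{1..r+1-k}. int (m k j)) - (\<Sum>i\<in>{1..k-1}. int (m i (k - i)))"
proof -
  have "vsum (roots_of_throws r m) k =
      (\<Sum>i\<in>{1..r}. \<Sum>j\<in>{1..r+1-i}. if k = i then int (m i j) else 0)
    - (\<Sum>i\<in>{1..r}. \<Sum>j\<in>{1..r+1-i}. if k = i + j then int (m i j) else 0)"
    unfolding vsum_roots_of_throws root_apply sum_subtractf[symmetric]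
    by (intro sum.cong refl) (auto simp: algebra_simps)
  also have "(\<Sum>i\<in>{1..r}. \<Sum>j\<in>{1..r+1-i}. if k = i then int (m i j) else 0) =
      (\<Sum>j\<in>{1..r+1-k}. int (m k j))"
  proof -
    have "(\<Sum>i\<in>{1..r}. \<Sum>j\<in>{1..r+1-i}. if k = i then int (m i j) else 0) =
        (\<Sum>i\<in>{1..r}. if k = i then (\<Sum>j\<in>{1..r+1-i}. int (m i j)) else 0)"
      by (intro sum.cong refl) auto
    then show ?thesis using k by (cases "k = r + 1") (auto simp: sum.delta)
  qed
  also have "(\<Sum>i\<in>{1..r}. \<Sum>j\<in>{1..r+1-i}. if k = i + j then int (m i j) else 0) =
      (\<Sum>i\<in>{1..r}. if i < k then int (m i (k - i)) else 0)"
  proof (intro sum.cong refl)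
    fix i assume "i \<in> {1..r}"
    then have "(\<Sum>j\<in>{1..r+1-i}. if k = i + j then int (m i j) else 0) =
        (\<Sum>j\<in>{1..r+1-i}. if j = k - i \<and> i < k then int (m i j) else 0)"
      by (intro sum.cong refl) auto
    also have "\<dots> = (if i < k then int (m i (k - i)) else 0)"
      using k \<open>i \<in> {1..r}\<close> by (auto simp: sum.delta)
    finally show "(\<Sum>j\<in>{1..r+1-i}. if k = i + j then int (m i j) else 0) = \<dots>" .
  qed
  also have "\<dots> = (\<Sum>i\<in>{1..k-1}. int (m i (k - i)))"
    using k by (simp add: sum.If_cases) (intro sum.cong; auto)
  finally show ?thesis .
qed

subsection \<open>Juggling sequences as throw counts\<close>

lemma JS_step_throw_count:
  assumes ss: "ss \<in> JS (Gamma \<Lambda>) a b r" and L: "\<Lambda> \<subseteq> pos_roots_A r" and i: "1 \<le> i" "i \<le> r"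
  shows "\<And>k. 1 \<le> k \<Longrightarrow> (ss ! i) k = (ss ! (i - 1)) (k + 1) + int (throw_count ss i k)"
    and "\<And>k. 1 \<le> k \<Longrightarrow> 0 < throw_count ss i k \<Longrightarrow> i + k \<le> r + 1 \<and> root i (i + k) \<in> \<Lambda>"
    and "(ss ! (i - 1)) 1 = (\<Sum>k\<in>{1..r+1-i}. int (throw_count ss i k))"
proof -
  have "juggling_step (Gamma \<Lambda>) i (ss ! (i - 1)) (ss ! i)" using ss i unfolding JS_def by auto
  then obtain c :: "nat \<Rightarrow> nat"
    where c_sum: "int (\<Sum>k\<in>{k. c k \<noteq> 0}. c k) = (ss ! (i - 1)) 1"
      and c_step: "\<forall>k\<ge>1. (ss ! i) k = (ss ! (i - 1)) (k + 1) + int (c k)"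
      and c_Gamma: "\<forall>k. 0 < c k \<longrightarrow> (i, k) \<in> Gamma \<Lambda>"
    unfolding juggling_step_def by blast
  have c_eq: "throw_count ss i k = c k" if "1 \<le> k" for k
    using c_step that unfolding throw_count_def by simp
  have c_supp: "k \<in> {1..r+1-i}" if "c k \<noteq> 0" for k
    using c_Gamma Gamma_memD[OF _ L, of i k] that by auto
  show "\<And>k. 1 \<le> k \<Longrightarrow> (ss ! i) k = (ss ! (i - 1)) (k + 1) + int (throw_count ss i k)"
    using c_step c_eq by simp
  show "\<And>k. 1 \<le> k \<Longrightarrow> 0 < throw_count ss i k \<Longrightarrow> i + k \<le> r + 1 \<and> root i (i + k) \<in> \<Lambda>"
    using c_eq c_Gamma Gamma_memD[OF _ L, of i] by simp
  have "(\<Sum>k\<in>{k. c k \<noteq> 0}. c k) = (\<Sum>k\<in>{1..r+1-i}. c k)"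
    by (rule sum.mono_neutral_left) (use c_supp in auto)
  also have "\<dots> = (\<Sum>k\<in>{1..r+1-i}. throw_count ss i k)"
    using c_eq by (intro sum.cong refl) auto
  finally show "(ss ! (i - 1)) 1 = (\<Sum>k\<in>{1..r+1-i}. int (throw_count ss i k))"
    using c_sum by simp
qed

lemma JS_nth_unfold:
  assumes ss: "ss \<in> JS (Gamma \<Lambda>) a b r" and L: "\<Lambda> \<subseteq> pos_roots_A r"
  shows "i \<le> r \<Longrightarrow> 1 \<le> k \<Longrightarrow>
           (ss ! i) k = a (i + k) + (\<Sum>i'\<in>{1..i}. int (throw_count ss i' (i + k - i')))"
proof (induction i arbitrary: k)
  case 0
  with ss show ?case unfolding JS_def by simp
next
  case (Suc i)
  have "(ss ! Suc i) k = (ss ! i) (k + 1) + int (throw_count ss (Suc i) k)"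
    using JS_step_throw_count(1)[OF ss L, of "Suc i"] Suc.prems by simp
  also have "\<dots> = a (Suc i + k) + (\<Sum>i'\<in>{1..Suc i}. int (throw_count ss i' (Suc i + k - i')))"
    using Suc by simp
  finally show ?case .
qed

lemma js_to_roots_eq_roots_of_throws:
  assumes ss: "ss \<in> JS (Gamma \<Lambda>) a b r" and L: "\<Lambda> \<subseteq> pos_roots_A r"
  shows "js_to_roots r ss = roots_of_throws r (throw_count ss)"
  unfolding js_to_roots_def roots_of_throws_def
proof (rule sum.cong[OF refl])
  fix i assume i: "i \<in> {1..r}"
  have "j \<in> {1..r+1-i}" if "1 \<le> j" "0 < throw_count ss i j" for j
    using JS_step_throw_count(2)[OF ss L, of i j] i that by auto
  then show "(\<Sum>j | 1 \<le> j \<and> 0 < throw_count ss i j. replicate_mset (throw_count ss i j) (root i (i + j))) =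
      (\<Sum>j\<in>{1..r+1-i}. replicate_mset (throw_count ss i j) (root i (i + j)))"
    by (intro sum.mono_neutral_left) auto
qed

text \<open>The inverse map: the state at time i holds the initial balls at height i + k and
  every ball thrown at a time \<open>i' \<le> i\<close> that lands at time i + k.\<close>

definition states_of_roots :: "nat \<Rightarrow> (nat \<Rightarrow> int) \<Rightarrow> (nat \<Rightarrow> int) multiset \<Rightarrow> (nat \<Rightarrow> int) list" where
  "states_of_roots r a M =
     map (\<lambda>i k. if k = 0 then 0 else a (i + k) + (\<Sum>i'\<in>{1..i}. int (count M (root i' (i + k)))))
       [0..<r+1]"

lemma length_states_of_roots: "length (states_of_roots r a M) = r + 1"
  by (simp add: states_of_roots_def)

lemma nth_states_of_roots:
  assumes "i \<le> r"
  shows "states_of_roots r a M ! i =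
     (\<lambda>k. if k = 0 then 0 else a (i + k) + (\<Sum>i'\<in>{1..i}. int (count M (root i' (i + k)))))"
proof -
  have "i < length [0..<r+1]" "[0..<r+1] ! i = i" using assms by (simp_all del: upt_Suc)
  then show ?thesis unfolding states_of_roots_def by (simp only: nth_map)
qed

lemma states_of_roots_step:
  assumes "1 \<le> i" "i \<le> r" "1 \<le> k"
  shows "(states_of_roots r a M ! i) k =
           (states_of_roots r a M ! (i - 1)) (k + 1) + int (count M (root i (i + k)))"
  using assms by (cases i) (simp_all add: nth_states_of_roots)

lemma states_of_roots_height_one:
  assumes "1 \<le> i" "i \<le> r"
  shows "(states_of_roots r a M ! (i - 1)) 1 = a i + (\<Sum>i'\<in>{1..i-1}. int (count M (root i' i)))"
  using assms by (cases i) (simp_all add: nth_states_of_roots)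

lemma states_of_roots_first: "a 0 = 0 \<Longrightarrow> states_of_roots r a M ! 0 = a"
  by (auto simp: nth_states_of_roots)

lemma count_js_to_roots:
  assumes ss: "ss \<in> JS (Gamma \<Lambda>) a b r" and L: "\<Lambda> \<subseteq> pos_roots_A r"
    and i: "1 \<le> i" "i \<le> r" and j: "1 \<le> j"
  shows "count (js_to_roots r ss) (root i (i + j)) = throw_count ss i j"
proof (cases "i + j \<le> r + 1")
  case True
  with i j show ?thesis
    by (simp add: js_to_roots_eq_roots_of_throws[OF ss L] count_roots_of_throws_root)
next
  case False
  then have "root i (i + j) \<notin> pos_roots_A r" using i j root_add_in_pos_roots_A_iff by blast
  moreover have "throw_count ss i j = 0" using JS_step_throw_count(2)[OF ss L i j] False by auto
  ultimately show ?thesis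
    by (simp add: js_to_roots_eq_roots_of_throws[OF ss L] count_roots_of_throws_notin)
qed

lemma states_of_roots_js_to_roots:
  assumes ss: "ss \<in> JS (Gamma \<Lambda>) a b r" and L: "\<Lambda> \<subseteq> pos_roots_A r"
  shows "states_of_roots r a (js_to_roots r ss) = ss"
proof (rule nth_equalityI)
  show "length (states_of_roots r a (js_to_roots r ss)) = length ss"
    using ss by (simp add: length_states_of_roots JS_def)
next
  fix i assume "i < length (states_of_roots r a (js_to_roots r ss))"
  then have i: "i \<le> r" by (simp add: length_states_of_roots)
  have "(states_of_roots r a (js_to_roots r ss) ! i) k = (ss ! i) k" for k
  proof (cases "k = 0")
    case True
    have "juggling_state (ss ! i)" using ss i unfolding JS_def by (auto simp: nth_mem)
    with True i show ?thesis by (simp add: nth_states_of_roots juggling_state_def)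
  next
    case False
    have "count (js_to_roots r ss) (root i' (i + k)) = throw_count ss i' (i + k - i')"
      if "i' \<in> {1..i}" for i'
    proof -
      from that i False have "1 \<le> i'" "i' \<le> r" "1 \<le> i + k - i'" "i' + (i + k - i') = i + k"
        by auto
      then show ?thesis using count_js_to_roots[OF ss L, of i' "i + k - i'"] by simp
    qed
    with False i show ?thesis by (simp add: nth_states_of_roots JS_nth_unfold[OF ss L i])
  qed
  then show "states_of_roots r a (js_to_roots r ss) ! i = ss ! i" by blast
qed

context
  fixes r :: nat and \<mu> :: "nat \<Rightarrow> int" and \<Lambda> :: "(nat \<Rightarrow> int) set"
  assumes \<mu>_supp: "\<forall>k. k \<notin> {1..r+1} \<longrightarrow> \<mu> k = 0"
    and \<mu>_sum: "(\<Sum>i=1..r+1. \<mu> i) = 0"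
    and \<Lambda>_pos: "\<Lambda> \<subseteq> pos_roots_A r"
begin

abbreviation init_state :: "nat \<Rightarrow> int" where
  "init_state \<equiv> \<lambda>k. if 1 \<le> k \<and> k \<le> r then \<mu> k else 0"

abbreviation final_state :: "nat \<Rightarrow> int" where
  "final_state \<equiv> \<lambda>k. if k = 1 then (\<Sum>i=1..r. \<mu> i) else 0"

lemma \<mu>_last: "\<mu> (r + 1) = - (\<Sum>i=1..r. \<mu> i)"
  using \<mu>_sum by simp

lemma js_to_roots_in_P_part:
  assumes ss: "ss \<in> JS (Gamma \<Lambda>) init_state final_state r"
  shows "js_to_roots r ss \<in> P_part \<Lambda> \<mu>"
proof -
  note R = js_to_roots_eq_roots_of_throws[OF ss \<Lambda>_pos]
  have "set_mset (js_to_roots r ss) \<subseteq> \<Lambda>"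
    using JS_step_throw_count(2)[OF ss \<Lambda>_pos] by (auto simp: R elim!: set_roots_of_throws)
  moreover have "vsum (js_to_roots r ss) k = \<mu> k" for k
  proof -
    consider "1 \<le> k" "k \<le> r" | "k = r + 1" | "k = 0 \<or> r + 1 < k" by linarith
    then show ?thesis
    proof cases
      case 1
      have "(ss ! (k - 1)) 1 = (\<Sum>j\<in>{1..r+1-k}. int (throw_count ss k j))"
        using JS_step_throw_count(3)[OF ss \<Lambda>_pos] 1 by simp
      moreover have "(ss ! (k - 1)) 1 = \<mu> k + (\<Sum>i\<in>{1..k-1}. int (throw_count ss i (k - i)))"
        using JS_nth_unfold[OF ss \<Lambda>_pos, of "k - 1" 1] 1 by simp
      ultimately show ?thesis using 1 by (simp add: R vsum_roots_of_throws_inside)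
    next
      case 2
      have "(ss ! r) 1 = (\<Sum>i=1..r. \<mu> i)" using ss unfolding JS_def by auto
      moreover have "(ss ! r) 1 = (\<Sum>i\<in>{1..r}. int (throw_count ss i (r + 1 - i)))"
        using JS_nth_unfold[OF ss \<Lambda>_pos, of r 1] by simp
      ultimately show ?thesis using 2 \<mu>_last by (simp add: R vsum_roots_of_throws_inside)
    next
      case 3
      then show ?thesis using \<mu>_supp by (auto simp: R vsum_roots_of_throws_outside)
    qed
  qed
  ultimately show ?thesis unfolding P_part_def by auto
qed

lemma P_part_subset_pos_roots: "M \<in> P_part \<Lambda> \<mu> \<Longrightarrow> set_mset M \<subseteq> pos_roots_A r"
  using \<Lambda>_pos unfolding P_part_def by auto

lemma count_P_part_root_beyond:
  assumes M: "M \<in> P_part \<Lambda> \<mu>" and "1 \<le> i" "i < l" "r + 1 < l"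
  shows "count M (root i l) = 0"
proof -
  have "root i (i + (l - i)) \<notin> pos_roots_A r"
    using assms root_add_in_pos_roots_A_iff[of i "l - i"] by auto
  then show ?thesis using P_part_subset_pos_roots[OF M] assms(3) by (auto simp: count_eq_zero_iff)
qed

lemma P_part_balance:
  assumes M: "M \<in> P_part \<Lambda> \<mu>" and k: "1 \<le> k" "k \<le> r + 1"
  shows "\<mu> k = (\<Sum>j\<in>{1..r+1-k}. int (count M (root k (k + j))))
                - (\<Sum>i\<in>{1..k-1}. int (count M (root i k)))"
proof -
  have "\<mu> k = vsum (roots_of_throws r (\<lambda>i j. count M (root i (i + j)))) k"
    using M roots_of_throws_count[OF P_part_subset_pos_roots[OF M]] unfolding P_part_def by auto
  also have "\<dots> = (\<Sum>j\<in>{1..r+1-k}. int (count M (root k (k + j))))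
                - (\<Sum>i\<in>{1..k-1}. int (count M (root i (i + (k - i)))))"
    using k by (rule vsum_roots_of_throws_inside)
  also have "(\<Sum>i\<in>{1..k-1}. int (count M (root i (i + (k - i))))) =
      (\<Sum>i\<in>{1..k-1}. int (count M (root i k)))"
    by (intro sum.cong refl) auto
  finally show ?thesis .
qed

lemma states_of_roots_last:
  assumes M: "M \<in> P_part \<Lambda> \<mu>"
  shows "states_of_roots r init_state M ! r = final_state"
proof
  fix k :: nat
  consider "k = 0" | "k = 1" | "2 \<le> k" by linarith
  then show "(states_of_roots r init_state M ! r) k = final_state k"
  proof cases
    case 2
    have "(\<Sum>i\<in>{1..r}. int (count M (root i (r + 1)))) = - \<mu> (r + 1)"
      using P_part_balance[OF M, of "r + 1"] by simp
    with 2 \<mu>_last show ?thesis by (simp add: nth_states_of_roots)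
  next
    case 3
    then have "count M (root i (r + k)) = 0" if "i \<in> {1..r}" for i
      using count_P_part_root_beyond[OF M] that by simp
    with 3 show ?thesis by (simp add: nth_states_of_roots)
  qed (simp add: nth_states_of_roots)
qed

lemma states_of_roots_juggling_state:
  assumes M: "M \<in> P_part \<Lambda> \<mu>" and i: "i \<le> r"
  shows "juggling_state (states_of_roots r init_state M ! i)"
proof -
  have "(states_of_roots r init_state M ! i) k = 0" if k: "\<not> k \<le> r + 1" for k
  proof -
    have "count M (root i' (i + k)) = 0" if "i' \<in> {1..i}" for i'
      using count_P_part_root_beyond[OF M] that k by simp
    with i k show ?thesis by (simp add: nth_states_of_roots)
  qed
  then have "{k. (states_of_roots r init_state M ! i) k \<noteq> 0} \<subseteq> {..r+1}"
    by auto
  then have "finite {k. (states_of_roots r init_state M ! i) k \<noteq> 0}"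
    by (rule finite_subset) simp
  moreover have "(states_of_roots r init_state M ! i) 0 = 0" using i by (simp add: nth_states_of_roots)
  ultimately show ?thesis unfolding juggling_state_def by blast
qed

lemma states_of_roots_juggling_step:
  assumes M: "M \<in> P_part \<Lambda> \<mu>" and i: "1 \<le> i" "i \<le> r"
  shows "juggling_step (Gamma \<Lambda>) i (states_of_roots r init_state M ! (i - 1))
           (states_of_roots r init_state M ! i)"
proof -
  define c where "c k = (if k = 0 then 0 else count M (root i (i + k)))" for k
  have c_Gamma: "(i, k) \<in> Gamma \<Lambda>" if "0 < c k" for k
  proof -
    from that have "1 \<le> k" "root i (i + k) \<in># M" unfolding c_def by (auto split: if_splits)
    with M i show ?thesis unfolding Gamma_def P_part_def by auto
  qed
  have supp: "{k. c k \<noteq> 0} \<subseteq> {1..r+1-i}"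
  proof
    fix k assume "k \<in> {k. c k \<noteq> 0}"
    then have "(i, k) \<in> Gamma \<Lambda>" using c_Gamma by simp
    from Gamma_memD(2,3)[OF this \<Lambda>_pos] show "k \<in> {1..r+1-i}" by simp
  qed
  have "(\<Sum>k\<in>{k. c k \<noteq> 0}. c k) = (\<Sum>k\<in>{1..r+1-i}. c k)"
    using supp by (intro sum.mono_neutral_left) auto
  also have "\<dots> = (\<Sum>k\<in>{1..r+1-i}. count M (root i (i + k)))"
    unfolding c_def by (intro sum.cong) auto
  finally have "int (\<Sum>k\<in>{k. c k \<noteq> 0}. c k) =
      (\<Sum>k\<in>{1..r+1-i}. int (count M (root i (i + k))))"
    by simp
  also have "\<dots> = \<mu> i + (\<Sum>i'\<in>{1..i-1}. int (count M (root i' i)))"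
    using P_part_balance[OF M, of i] i by simp
  also have "\<dots> = (states_of_roots r init_state M ! (i - 1)) 1"
    using states_of_roots_height_one[OF i] i by simp
  finally have c_sum: "int (\<Sum>k\<in>{k. c k \<noteq> 0}. c k) = (states_of_roots r init_state M ! (i - 1)) 1" .
  have "finite {k. c k \<noteq> 0}" using supp by (rule finite_subset) simp
  with c_sum c_Gamma show ?thesis
    unfolding juggling_step_def
    by (intro exI[of _ c]) (simp add: c_def states_of_roots_step[OF i])
qed

lemma states_of_roots_in_JS:
  assumes M: "M \<in> P_part \<Lambda> \<mu>"
  shows "states_of_roots r init_state M \<in> JS (Gamma \<Lambda>) init_state final_state r"
  unfolding JS_def
  using states_of_roots_juggling_state[OF M] states_of_roots_juggling_step[OF M]
    states_of_roots_last[OF M]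
  by (auto simp: length_states_of_roots states_of_roots_first in_set_conv_nth)

lemma js_to_roots_states_of_roots:
  assumes M: "M \<in> P_part \<Lambda> \<mu>"
  shows "js_to_roots r (states_of_roots r init_state M) = M"
proof -
  have "js_to_roots r (states_of_roots r init_state M) =
      roots_of_throws r (throw_count (states_of_roots r init_state M))"
    by (rule js_to_roots_eq_roots_of_throws[OF states_of_roots_in_JS[OF M] \<Lambda>_pos])
  also have "\<dots> = roots_of_throws r (\<lambda>i j. count M (root i (i + j)))"
    by (rule roots_of_throws_cong) (simp add: throw_count_def states_of_roots_step)
  also have "\<dots> = M"
    by (rule roots_of_throws_count[OF P_part_subset_pos_roots[OF M]])
  finally show ?thesis .
qed

lemma bij_betw_js_to_roots:
  "bij_betw (js_to_roots r) (JS (Gamma \<Lambda>) init_state final_state r) (P_part \<Lambda> \<mu>)"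
  by (rule bij_betw_byWitness[where f' = "states_of_roots r init_state"])
    (use states_of_roots_js_to_roots[OF _ \<Lambda>_pos] js_to_roots_states_of_roots
      js_to_roots_in_P_part states_of_roots_in_JS in blast)+

end

theorem mainTheorem6:
  fixes r :: nat and \<mu> :: "nat \<Rightarrow> int" and \<Lambda> :: "(nat \<Rightarrow> int) set"
  assumes "r \<ge> 1"
    and "\<forall>k. k \<notin> {1..r+1} \<longrightarrow> \<mu> k = 0"
    and "(\<Sum>i=1..r+1. \<mu> i) = 0"
    and "\<Lambda> \<subseteq> pos_roots_A r"
  shows "bij_betw (js_to_roots r)
           (JS (Gamma \<Lambda>) (\<lambda>k. if 1 \<le> k \<and> k \<le> r then \<mu> k else 0)
                         (\<lambda>k. if k = 1 then (\<Sum>i=1..r. \<mu> i) else 0) r)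
           (P_part \<Lambda> \<mu>)
       \<and> K_part \<Lambda> \<mu> = js (Gamma \<Lambda>) (\<lambda>k. if 1 \<le> k \<and> k \<le> r then \<mu> k else 0)
                         (\<lambda>k. if k = 1 then (\<Sum>i=1..r. \<mu> i) else 0) r"
  using bij_betw_js_to_roots[OF assms(2-4)]
  unfolding K_part_def js_def by (auto dest: bij_betw_same_card)

end
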